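(* Let $\mathcal{M}=(S,A,\Delta,T,\rho)$ be a w\~pMDP with $T=\{t_0,\dots,t_n\}$ and $0=\rho(t_0)<\rho(t_1)<\dots<\rho(t_n)$, and let $\mathcal{N}$ be the \~pMDP obtained by adding fresh target states $\mathit{fin},\mathit{fail}$ (the only targets of $\mathcal{N}$), a fresh action $a\notin A$, and the transitions $(t_i,a,\mathit{fin})$ and $(t_i,a,t_{i-1})$ for $1\le i\le n$ and $(t_0,a,\mathit{fail})$. Then for every graph-preserving valuation $\mathsf{val}$ of $\mathcal{N}$ and every strategy $\sigma$ of $\mathcal{N}$, $0=\mathbb{P}^{t_0}[\Diamond \mathit{fin}]<\mathbb{P}^{t_1}[\Diamond \mathit{fin}]<\dots<\mathbb{P}^{t_n}[\Diamond \mathit{fin}]$, where probabilities are taken in the Markov chain induced by $\mathsf{val}$ and $\sigma$ on $\mathcal{N}$.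
   Context: A w\~pMDP $(S,A,\Delta,T,\rho)$ consists of finite states $S$, actions $A$, targets $T\subseteq S$ (without outgoing transitions), a set of transitions $\Delta\subseteq (S\setminus T)\times A\times S$ and weights $\rho:T\to\mathbb{Q}$; a \~pMDP is one with $T=\{\mathit{fin},\mathit{fail}\}$. A graph-preserving valuation assigns to each state-action pair $(s,a)$ with transitions in $\Delta$ a probability distribution with full support on $\{s':(s,a,s')\in\Delta\}$. A strategy maps each non-target state $s$ to an action $a$ available at $s$, i.e. such that $\Delta$ contains a transition $(s,a,s')$ (so in $\mathcal{N}$ the only action available at each $t_i$ is $a$); together with a valuation it induces a Markov chain, and $\mathbb{P}^s[\Diamond\mathit{fin}]$ is the probability of reaching $\mathit{fin}$ from $s$ in it. *)

theory Defs
  imports Complex_Main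
begin

text \<open>The weights rho are given separately (as a function on states, only its values on T matter).\<close>
definition wpMDP :: "'s set \<Rightarrow> 'a set \<Rightarrow> ('s \<times> 'a \<times> 's) set \<Rightarrow> 's set \<Rightarrow> bool" where
  "wpMDP S A D T \<longleftrightarrow> finite S \<and> finite A \<and> T \<subseteq> S \<and> D \<subseteq> (S - T) \<times> A \<times> S"

definition succs :: "('s \<times> 'a \<times> 's) set \<Rightarrow> 's \<Rightarrow> 'a \<Rightarrow> 's set" where
  "succs D s act = {s'. (s, act, s') \<in> D}"

definition graph_preserving :: "('s \<times> 'a \<times> 's) set \<Rightarrow> ('s \<Rightarrow> 'a \<Rightarrow> 's \<Rightarrow> real) \<Rightarrow> bool" where
  "graph_preserving D val \<longleftrightarrow>
     (\<forall>s act. succs D s act \<noteq> {} \<longrightarrow>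
        (\<forall>s'\<in>succs D s act. val s act s' > 0) \<and> (\<Sum>s'\<in>succs D s act. val s act s') = 1)"

text \<open>Memoryless deterministic strategy: picks an available action at every non-target state.\<close>
definition is_strategy :: "'s set \<Rightarrow> ('s \<times> 'a \<times> 's) set \<Rightarrow> 's set \<Rightarrow> ('s \<Rightarrow> 'a) \<Rightarrow> bool" where
  "is_strategy S D T \<sigma> \<longleftrightarrow> (\<forall>s\<in>S - T. succs D s (\<sigma> s) \<noteq> {})"

fun reach_within :: "('s \<times> 'a \<times> 's) set \<Rightarrow> 's set \<Rightarrow> ('s \<Rightarrow> 'a \<Rightarrow> 's \<Rightarrow> real) \<Rightarrow> ('s \<Rightarrow> 'a)
    \<Rightarrow> 's \<Rightarrow> nat \<Rightarrow> 's \<Rightarrow> real" where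
  "reach_within D T val \<sigma> g 0 s = (if s = g then 1 else 0)"
| "reach_within D T val \<sigma> g (Suc k) s =
     (if s = g then 1 else if s \<in> T then 0
      else (\<Sum>s'\<in>succs D s (\<sigma> s). val s (\<sigma> s) s' * reach_within D T val \<sigma> g k s'))"

definition reach_prob :: "('s \<times> 'a \<times> 's) set \<Rightarrow> 's set \<Rightarrow> ('s \<Rightarrow> 'a \<Rightarrow> 's \<Rightarrow> real) \<Rightarrow> ('s \<Rightarrow> 'a)
    \<Rightarrow> 's \<Rightarrow> 's \<Rightarrow> real" where
  "reach_prob D T val \<sigma> g s = (SUP k. reach_within D T val \<sigma> g k s)"

definition N_trans :: "('s \<times> 'a \<times> 's) set \<Rightarrow> (nat \<Rightarrow> 's) \<Rightarrow> nat \<Rightarrow> 'a \<Rightarrow> 's \<Rightarrow> 's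
    \<Rightarrow> ('s \<times> 'a \<times> 's) set" where
  "N_trans D t n a fin fail =
     D \<union> {(t i, a, fin) | i. 1 \<le> i \<and> i \<le> n} \<union> {(t i, a, t (i - 1)) | i. 1 \<le> i \<and> i \<le> n}
       \<union> {(t 0, a, fail)}"

end

theory Submission
  imports Defs
begin

text \<open>Under any strategy the fresh action a is the only one available at a target t_i, so
  the targets form a ladder: from t_i the chain moves up to fin with probability v_i and
  down to t_(i-1) with probability w_i = 1 - v_i, and from t_0 it moves to fail. Hence
  P_i = P^(t_i)[<> fin] satisfies P_0 = 0 and P_i = v_i + w_i P_(i-1), and
  P_i - P_(i-1) = v_i (1 - P_(i-1)) > 0 since all P_i stay below 1.\<close>

lemma graph_preserving_pos:
  "graph_preserving D val \<Longrightarrow> s' \<in> succs D s act \<Longrightarrow> 0 < val s act s'"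
  unfolding graph_preserving_def by blast

lemma graph_preserving_sum:
  "graph_preserving D val \<Longrightarrow> succs D s act \<noteq> {} \<Longrightarrow> (\<Sum>s'\<in>succs D s act. val s act s') = 1"
  unfolding graph_preserving_def by blast

lemma reach_within_goal [simp]: "reach_within D T val \<sigma> g k g = 1"
  by (cases k) auto

lemma reach_within_other_target:
  "s \<in> T \<Longrightarrow> s \<noteq> g \<Longrightarrow> reach_within D T val \<sigma> g k s = 0"
  by (cases k) auto

lemma reach_within_nonneg:
  assumes "graph_preserving D val"
  shows "0 \<le> reach_within D T val \<sigma> g k s"
proof (induction k arbitrary: s)
  case (Suc k)
  then show ?case
    using graph_preserving_pos[OF assms] by (auto intro!: sum_nonneg simp: less_imp_le)
qed simp

lemma reach_within_Suc_mono:
  assumes "graph_preserving D val"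
  shows "reach_within D T val \<sigma> g k s \<le> reach_within D T val \<sigma> g (Suc k) s"
proof (induction k arbitrary: s)
  case 0
  show ?case
    using reach_within_nonneg[OF assms, of T \<sigma> g 1 s] by (simp del: reach_within.simps(2))
next
  case (Suc k)
  have "val s (\<sigma> s) s' * reach_within D T val \<sigma> g k s'
      \<le> val s (\<sigma> s) s' * reach_within D T val \<sigma> g (Suc k) s'"
    if "s' \<in> succs D s (\<sigma> s)" for s'
    using Suc.IH graph_preserving_pos[OF assms that] by (intro mult_left_mono) auto
  then show ?case
    by (auto intro!: sum_mono)
qed

lemma reach_prob_eqI:
  assumes "graph_preserving D val"
    and const: "\<And>k. k0 \<le> k \<Longrightarrow> reach_within D T val \<sigma> g k s = c"
  shows "reach_prob D T val \<sigma> g s = c"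
  unfolding reach_prob_def
proof (rule cSup_eq_maximum)
  show "c \<in> range (\<lambda>k. reach_within D T val \<sigma> g k s)"
    using const[of k0] by (auto intro: sym)
next
  have inc: "incseq (\<lambda>k. reach_within D T val \<sigma> g k s)"
    by (intro incseq_SucI reach_within_Suc_mono[OF assms(1)])
  fix x
  assume "x \<in> range (\<lambda>k. reach_within D T val \<sigma> g k s)"
  then obtain k where "x = reach_within D T val \<sigma> g k s"
    by blast
  also have "\<dots> \<le> reach_within D T val \<sigma> g (max k k0) s"
    using inc by (simp add: incseq_def)
  also have "\<dots> = c"
    by (simp add: const)
  finally show "x \<le> c" .
qed

text \<open>Probability of reaching the top from rung i of a ladder whose rung j > 0 leads to the
  top with probability v j and to rung j - 1 with probability w j, and whose rung 0 is a trap.\<close>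
fun ladder_prob :: "(nat \<Rightarrow> real) \<Rightarrow> (nat \<Rightarrow> real) \<Rightarrow> nat \<Rightarrow> real" where
  "ladder_prob v w 0 = 0"
| "ladder_prob v w (Suc i) = v (Suc i) + w (Suc i) * ladder_prob v w i"

lemma ladder_prob_bounds:
  assumes "\<And>j. 0 < j \<Longrightarrow> j \<le> i \<Longrightarrow> 0 < v j \<and> 0 < w j \<and> v j + w j = 1"
  shows "0 \<le> ladder_prob v w i \<and> ladder_prob v w i < 1"
  using assms
proof (induction i)
  case (Suc i)
  then have p: "0 \<le> ladder_prob v w i" "ladder_prob v w i < 1"
    by auto
  have vw: "0 < v (Suc i)" "0 < w (Suc i)" "v (Suc i) + w (Suc i) = 1"
    using Suc.prems by auto
  have "w (Suc i) * ladder_prob v w i < w (Suc i)"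
    using p vw by (simp add: mult_less_cancel_left1)
  moreover have "0 \<le> w (Suc i) * ladder_prob v w i"
    using p vw by simp
  ultimately have "0 \<le> v (Suc i) + w (Suc i) * ladder_prob v w i"
    "v (Suc i) + w (Suc i) * ladder_prob v w i < 1"
    using vw by linarith+
  then show ?case
    by simp
qed simp

lemma ladder_prob_less_Suc:
  assumes "\<And>j. 0 < j \<Longrightarrow> j \<le> Suc i \<Longrightarrow> 0 < v j \<and> 0 < w j \<and> v j + w j = 1"
  shows "ladder_prob v w i < ladder_prob v w (Suc i)"
proof -
  have "ladder_prob v w i < 1"
    using ladder_prob_bounds[of i v w] assms by simp
  moreover have "0 < v (Suc i)" "w (Suc i) = 1 - v (Suc i)"
    using assms[of "Suc i"] by auto
  ultimately have "0 < v (Suc i) * (1 - ladder_prob v w i)"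
    by simp
  also have "\<dots> = ladder_prob v w (Suc i) - ladder_prob v w i"
    by (simp add: \<open>w (Suc i) = 1 - v (Suc i)\<close> algebra_simps)
  finally show ?thesis
    by simp
qed

locale target_ladder =
  fixes D :: "('s \<times> 'a \<times> 's) set" and t :: "nat \<Rightarrow> 's" and n :: nat
    and a :: 'a and fin fail :: 's
  assumes targets_no_trans: "\<And>i b x. i \<le> n \<Longrightarrow> (t i, b, x) \<notin> D"
    and t_inj: "inj_on t {0..n}"
    and fin_fresh: "fin \<notin> t ` {0..n}"
    and fail_fresh: "fail \<notin> t ` {0..n}"
    and fin_ne_fail: "fin \<noteq> fail"
begin

abbreviation N :: "('s \<times> 'a \<times> 's) set" where
  "N \<equiv> N_trans D t n a fin fail"

lemma t_eq_iff: "i \<le> n \<Longrightarrow> j \<le> n \<Longrightarrow> t i = t j \<longleftrightarrow> i = j"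
  using t_inj by (auto dest: inj_onD)

lemma succs_N_other_action: "i \<le> n \<Longrightarrow> b \<noteq> a \<Longrightarrow> succs N (t i) b = {}"
  using targets_no_trans unfolding succs_def N_trans_def by auto

lemma succs_N_bottom: "succs N (t 0) a = {fail}"
  using targets_no_trans t_eq_iff unfolding succs_def N_trans_def by fastforce

lemma succs_N_step: "Suc j \<le> n \<Longrightarrow> succs N (t (Suc j)) a = {fin, t j}"
  using targets_no_trans t_eq_iff fin_fresh unfolding succs_def N_trans_def
  by (fastforce intro!: exI[of _ "Suc j"])

lemma strategy_at_target:
  assumes "is_strategy S' N {fin, fail} \<sigma>" "t i \<in> S'" "i \<le> n"
  shows "\<sigma> (t i) = a"
proof (rule ccontr)
  assume "\<sigma> (t i) \<noteq> a"
  then have "succs N (t i) (\<sigma> (t i)) = {}"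
    using succs_N_other_action assms(3) by blast
  moreover have "t i \<in> S' - {fin, fail}"
    using assms(2,3) fin_fresh fail_fresh by auto
  ultimately show False
    using assms(1) unfolding is_strategy_def by blast
qed

end

locale ladder_chain = target_ladder D t n a fin fail
  for D :: "('s \<times> 'a \<times> 's) set" and t n a fin fail +
  fixes val :: "'s \<Rightarrow> 'a \<Rightarrow> 's \<Rightarrow> real" and \<sigma> :: "'s \<Rightarrow> 'a"
  assumes val_graph_preserving: "graph_preserving (N_trans D t n a fin fail) val"
    and \<sigma>_targets: "\<And>i. i \<le> n \<Longrightarrow> \<sigma> (t i) = a"
begin

definition up :: "nat \<Rightarrow> real" where
  "up i = val (t i) a fin"

definition down :: "nat \<Rightarrow> real" where
  "down i = val (t i) a (t (i - 1))"

lemma up_down_step: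
  assumes "0 < j" "j \<le> n"
  shows "0 < up j \<and> 0 < down j \<and> up j + down j = 1"
proof -
  obtain i where j: "j = Suc i"
    using assms(1) gr0_implies_Suc by blast
  have succs: "succs N (t j) a = {fin, t i}"
    using succs_N_step assms(2) j by blast
  have "fin \<noteq> t i"
    using fin_fresh assms(2) j by auto
  moreover have "(\<Sum>s'\<in>{fin, t i}. val (t j) a s') = 1"
    using graph_preserving_sum[OF val_graph_preserving, of "t j" a] succs by simp
  ultimately show ?thesis
    using graph_preserving_pos[OF val_graph_preserving, of _ "t j" a] succs
    unfolding up_def down_def j by auto
qed

lemma reach_within_target:
  "i \<le> n \<Longrightarrow> i \<le> k \<Longrightarrow> reach_within N {fin, fail} val \<sigma> fin k (t i) = ladder_prob up down i"
proof (induction k arbitrary: i)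
  case 0
  then show ?case
    using fin_fresh by auto
next
  case (Suc k)
  have not_target: "t i \<noteq> fin" "t i \<notin> {fin, fail}"
    using Suc.prems(1) fin_fresh fail_fresh by auto
  show ?case
  proof (cases i)
    case 0
    then show ?thesis
      using not_target \<sigma>_targets succs_N_bottom fin_ne_fail
      by (simp add: reach_within_other_target)
  next
    case (Suc j)
    have "fin \<noteq> t j"
      using fin_fresh Suc.prems(1) Suc by auto
    moreover have "reach_within N {fin, fail} val \<sigma> fin k (t j) = ladder_prob up down j"
      using Suc.IH Suc.prems Suc by simp
    ultimately show ?thesis
      using not_target \<sigma>_targets[OF Suc.prems(1)] succs_N_step[of j] Suc.prems(1)
      unfolding Suc up_def down_def by simp
  qed
qed

lemma reach_prob_target:
  "i \<le> n \<Longrightarrow> reach_prob N {fin, fail} val \<sigma> fin (t i) = ladder_prob up down i"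
  using reach_within_target by (intro reach_prob_eqI[OF val_graph_preserving]) auto

lemma reach_prob_targets_strictly_increasing:
  "reach_prob N {fin, fail} val \<sigma> fin (t 0) = 0
   \<and> (\<forall>i<n. reach_prob N {fin, fail} val \<sigma> fin (t i) < reach_prob N {fin, fail} val \<sigma> fin (t (Suc i)))"
  using reach_prob_target ladder_prob_less_Suc[of _ up down] up_down_step by auto

end

theorem lemma1:
  fixes S :: "'s set" and A :: "'a set" and D :: "('s \<times> 'a \<times> 's) set"
    and t :: "nat \<Rightarrow> 's" and n :: nat and \<rho> :: "'s \<Rightarrow> rat"
    and fin fail :: 's and a :: 'a
    and val :: "'s \<Rightarrow> 'a \<Rightarrow> 's \<Rightarrow> real" and \<sigma> :: "'s \<Rightarrow> 'a"
  assumes M: "wpMDP S A D (t ` {0..n})"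
    and t_inj: "inj_on t {0..n}"
    and rho0: "\<rho> (t 0) = 0"
    and rho_mono: "\<forall>i<n. \<rho> (t i) < \<rho> (t (Suc i))"
    and fresh: "fin \<notin> S" "fail \<notin> S" "fin \<noteq> fail" "a \<notin> A"
    and val: "graph_preserving (N_trans D t n a fin fail) val"
    and strat: "is_strategy (S \<union> {fin, fail}) (N_trans D t n a fin fail) {fin, fail} \<sigma>"
  shows "reach_prob (N_trans D t n a fin fail) {fin, fail} val \<sigma> fin (t 0) = 0
       \<and> (\<forall>i<n. reach_prob (N_trans D t n a fin fail) {fin, fail} val \<sigma> fin (t i)
              < reach_prob (N_trans D t n a fin fail) {fin, fail} val \<sigma> fin (t (Suc i)))"
proof -
  \<comment> \<open>The weights only name the targets in increasing order; their values and a \<notin> A play no role.\<close>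
  have targets_in_S: "t ` {0..n} \<subseteq> S" and D_sub: "D \<subseteq> (S - t ` {0..n}) \<times> A \<times> S"
    using M unfolding wpMDP_def by auto
  interpret target_ladder D t n a fin fail
    using D_sub targets_in_S t_inj fresh by unfold_locales auto
  have \<sigma>_targets: "\<sigma> (t i) = a" if "i \<le> n" for i
    using targets_in_S that by (intro strategy_at_target[OF strat]) (auto simp: image_subset_iff)
  interpret ladder_chain D t n a fin fail val \<sigma>
    by unfold_locales (fact val, fact \<sigma>_targets)
  show ?thesis
    by (rule reach_prob_targets_strictly_increasing)
qed

end
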